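(* Let $d\ge 3$ and let $K_d$ be the complete graph on the vertex set $\{1,\ldots,d\}$. Let $\alpha\in\mathbb{C}$ be a root of the Ehrhart polynomial $i(\mathcal{P}_{K_d},m)$ of the edge polytope $\mathcal{P}_{K_d}$. Then (1) if $d=3$, then $\alpha\in\{-1,-2\}$; (2) if $d\ge 4$, then $-\tfrac{d}{2}<\operatorname{Re}(\alpha)<0$.
   Context: For a graph $G$ on vertex set $\{1,\ldots,d\}$ with edge set $E(G)$, and an edge $e=\{i,j\}$, set $\rho(e)=\mathbf{e}_i+\mathbf{e}_j\in\mathbb{R}^d$, where $\mathbf{e}_i$ is the $i$-th unit coordinate vector. The edge polytope $\mathcal{P}_G$ is the convex hull of $\{\rho(e): e\in E(G)\}$. For an integral convex polytope $\mathcal{P}\subset\mathbb{R}^N$, its Ehrhart polynomial is the polynomial $i(\mathcal{P},m)$ satisfying $i(\mathcal{P},m)=\#(m\mathcal{P}\cap\mathbb{Z}^N)$ for all integers $m\ge 0$. *)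

theory Defs
  imports "HOL-Analysis.Analysis" "HOL-Computational_Algebra.Polynomial"
begin

text \<open>Vertices of the graph are the elements of the finite type 'n (so d = CARD('n)),
  a graph is given by its set of edges (two-element subsets of 'n).\<close>

definition complete_graph_edges :: "'n set set" where
  "complete_graph_edges = {{i, j} | i j. i \<noteq> j}"

definition rho :: "'n::finite set \<Rightarrow> real ^ 'n" where
  "rho e = (\<Sum>i\<in>e. axis i 1)"

definition edge_polytope :: "'n::finite set set \<Rightarrow> (real ^ 'n) set" where
  "edge_polytope E = convex hull (rho ` E)"

definition lattice_points_count :: "(real ^ 'n::finite) set \<Rightarrow> nat \<Rightarrow> nat" where
  "lattice_points_count P m =
     card {x \<in> (\<lambda>y. real m *\<^sub>R y) ` P. \<forall>i. x $ i \<in> \<int>}"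

definition is_ehrhart_poly :: "(real ^ 'n::finite) set \<Rightarrow> real poly \<Rightarrow> bool" where
  "is_ehrhart_poly P p \<longleftrightarrow> (\<forall>m::nat. poly p (real m) = real (lattice_points_count P m))"

end

theory Submission
  imports Defs "HOL-Library.Multiset"
begin

(*
  The lattice points of m P(K_d) are the vectors f in N^d with all f_i <= m and
  sum f = 2m: such an f is the sum of m edge vectors, since removing an edge between two
  largest entries stays inside the set for m - 1. At most one entry of a vector with sum 2m
  exceeds m, so inclusion-exclusion over compositions gives, with k = d - 1 and the rising
  factorial (x)_k,
      i(P(K_d), m) = ((2m + 1)_k - d (m)_k) / k!,
  and every root satisfies (2a + 1)_k = d (a)_k. Compare moduli factor by factor:
  if Re a >= 0 then |(2a + 1)_k| >= 2k |(a)_k| > d |(a)_k|; if Re a <= -d/2, the reflection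
  u = -(2a + d) into the right half-plane and an induction in steps of two starting from
  k = 3, 4 give |(2a + 1)_k| > d |(a)_k|. For d = 3 the equation is (a + 1)(a + 2) = 0.
*)

section \<open>Lattice points of the dilated edge polytope\<close>

definition capped_sums :: "nat \<Rightarrow> nat \<Rightarrow> ('n::finite \<Rightarrow> nat) set" where
  "capped_sums m s = {f. (\<forall>i. f i \<le> m) \<and> sum f UNIV = s}"

lemma ex_max_on_finite:
  fixes f :: "'a \<Rightarrow> nat"
  assumes "finite A" "A \<noteq> {}"
  obtains i where "i \<in> A" "\<And>l. l \<in> A \<Longrightarrow> f l \<le> f i"
proof -
  have "Max (f ` A) \<in> f ` A"
    using assms by (intro Max_in) auto
  then obtain i where "i \<in> A" "f i = Max (f ` A)"
    by (metis imageE)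
  then show thesis
    using that assms by simp
qed

lemma obtain_two_largest:
  fixes f :: "'n::finite \<Rightarrow> nat"
  assumes "CARD('n) \<ge> 2"
  obtains i j where "i \<noteq> j" "\<And>l. f l \<le> f i" "\<And>l. l \<noteq> i \<Longrightarrow> f l \<le> f j"
proof -
  obtain i where imax: "\<And>l. f l \<le> f i"
    by (rule ex_max_on_finite[of UNIV f]) auto
  have "card (UNIV - {i}) \<noteq> 0"
    using assms by (simp add: card_Diff_singleton)
  then have ne: "UNIV - {i} \<noteq> {}"
    by (metis card.empty)
  obtain j where "j \<in> UNIV - {i}" and "\<And>l. l \<in> UNIV - {i} \<Longrightarrow> f l \<le> f j"
    by (rule ex_max_on_finite[OF finite ne, of f]) blast
  then show thesis
    using that[of i j] imax by blast
qed

lemma capped_sums_remove_edge: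
  fixes f :: "'n::finite \<Rightarrow> nat"
  assumes card: "CARD('n) \<ge> 2" and f: "f \<in> capped_sums (Suc k) (2 * Suc k)"
  obtains i j g where "i \<noteq> j" "g \<in> capped_sums k (2 * k)"
    "\<And>l. f l = g l + (if l \<in> {i, j} then 1 else 0)"
proof -
  have fle: "f l \<le> Suc k" for l
    using f by (simp add: capped_sums_def)
  have fsum: "sum f UNIV = 2 * Suc k"
    using f by (simp add: capped_sums_def)
  obtain i j where j: "j \<noteq> i" and imax: "\<And>l. f l \<le> f i" and jmax: "\<And>l. l \<noteq> i \<Longrightarrow> f l \<le> f j"
    using obtain_two_largest[OF card, of f] by metis
  have "sum f UNIV = f i + sum f (UNIV - {i})"
    by (rule sum.remove) auto
  also have "sum f (UNIV - {i}) = f j + sum f (UNIV - {i} - {j})"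
    using j by (intro sum.remove) auto
  also have "UNIV - {i} - {j} = UNIV - {i, j}"
    by auto
  finally have sum_split: "sum f UNIV = f i + f j + sum f (UNIV - {i, j})"
    by simp
  have fj: "f j \<ge> 1"
  proof (rule ccontr)
    assume "\<not> f j \<ge> 1"
    then have "f l = 0" if "l \<noteq> i" for l
      using jmax[OF that] by simp
    then show False
      using sum_split fsum fle[of i] j by simp
  qed
  have fi: "f i \<ge> 1" using fj imax[of j] by simp
  have fl: "f l \<le> k" if "l \<notin> {i, j}" for l
  proof (rule ccontr)
    assume "\<not> f l \<le> k"
    then have "f l = Suc k" "f j = Suc k" "f i = Suc k"
      using fle[of l] fle[of j] fle[of i] jmax[of l] imax[of j] that by auto
    moreover have "f l \<le> sum f (UNIV - {i, j})" using that by (intro member_le_sum) auto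
    ultimately show False using sum_split fsum by simp
  qed
  define g where "g l = f l - (if l \<in> {i, j} then 1 else 0)" for l
  have fg: "f l = g l + (if l \<in> {i, j} then 1 else 0)" for l
    using fi fj by (auto simp: g_def)
  have "sum f UNIV = sum g UNIV + 2"
    using j by (simp add: fg sum.distrib sum.If_cases Int_absorb1 Collect_disj_eq)
  then have "g \<in> capped_sums k (2 * k)"
    using fsum fle[of i] fle[of j] fl by (auto simp: capped_sums_def g_def)
  with j fg show thesis
    by (intro that[of i j g]) auto
qed

lemma rho_nth: "rho (e :: 'n::finite set) $ l = (if l \<in> e then 1 else 0)"
  unfolding rho_def by (simp add: axis_def)

lemma rho_in_edge_polytope:
  "e \<in> E \<Longrightarrow> rho e \<in> edge_polytope E"
  unfolding edge_polytope_def by (rule hull_inc) simp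

lemma edge_polytope_complete_graph_subset:
  "edge_polytope (complete_graph_edges :: 'n::finite set set)
     \<subseteq> {y. (\<forall>i. y$i \<in> {0..1}) \<and> (\<Sum>i\<in>UNIV. y$i) = 2}"
  unfolding edge_polytope_def
proof (rule hull_minimal)
  show "rho ` complete_graph_edges \<subseteq> {y::real^'n. (\<forall>i. y$i \<in> {0..1}) \<and> (\<Sum>i\<in>UNIV. y$i) = 2}"
    by (auto simp: complete_graph_edges_def rho_nth sum.If_cases Collect_disj_eq)
  have "convex ({y::real^'n. \<forall>i. y$i \<in> {0..1}} \<inter> {y. (\<chi> i. 1) \<bullet> y = 2})"
    by (intro convex_Int convex_box_cart convex_hyperplane) (simp only: Collect_mem_eq convex_real_interval)
  moreover have "{y::real^'n. (\<forall>i. y$i \<in> {0..1}) \<and> (\<Sum>i\<in>UNIV. y$i) = 2}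
      = {y. \<forall>i. y$i \<in> {0..1}} \<inter> {y. (\<chi> i. 1) \<bullet> y = 2}"
    by (auto simp: inner_vec_def)
  ultimately show "convex {y::real^'n. (\<forall>i. y$i \<in> {0..1}) \<and> (\<Sum>i\<in>UNIV. y$i) = 2}"
    by simp
qed

lemma convex_dilation_add:
  fixes S :: "'a::real_vector set"
  assumes "convex S" "x \<in> (\<lambda>y. real m *\<^sub>R y) ` S" "y \<in> S"
  shows "x + y \<in> (\<lambda>y. real (Suc m) *\<^sub>R y) ` S"
proof -
  obtain x' where x': "x' \<in> S" "x = real m *\<^sub>R x'"
    using assms(2) by blast
  define z where "z = (real m / real (Suc m)) *\<^sub>R x' + (1 / real (Suc m)) *\<^sub>R y"
  have "z \<in> S"
    unfolding z_def by (intro convexD[OF assms(1) x'(1) assms(3)]) (auto simp: field_simps)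
  moreover have "x + y = real (Suc m) *\<^sub>R z"
    unfolding z_def x'(2) by (simp add: scaleR_add_right del: of_nat_Suc)
  ultimately show ?thesis by blast
qed

definition vec_of_nat :: "('n::finite \<Rightarrow> nat) \<Rightarrow> real^'n" where
  "vec_of_nat f = (\<chi> i. real (f i))"

lemma vec_of_nat_nth [simp]: "vec_of_nat f $ i = real (f i)"
  by (simp add: vec_of_nat_def)

lemma inj_vec_of_nat: "inj vec_of_nat"
  by (rule injI) (simp add: vec_eq_iff fun_eq_iff)

lemma vec_of_nat_capped_sums_in_dilated_edge_polytope:
  fixes f :: "'n::finite \<Rightarrow> nat"
  assumes "CARD('n) \<ge> 2" and "f \<in> capped_sums m (2 * m)"
  shows "vec_of_nat f \<in> (\<lambda>y. real m *\<^sub>R y) ` edge_polytope complete_graph_edges"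
  using assms(2)
proof (induction m arbitrary: f)
  case 0
  then have "vec_of_nat f = 0"
    by (simp add: capped_sums_def vec_eq_iff)
  moreover obtain i j :: 'n where "i \<noteq> j"
    using assms(1) by (metis card_le_Suc0_iff_eq finite not_less_eq_eq numeral_2_eq_2)
  then have "rho {i, j} \<in> edge_polytope complete_graph_edges"
    by (intro rho_in_edge_polytope) (auto simp: complete_graph_edges_def)
  ultimately show ?case
    by (metis image_eqI of_nat_0 scaleR_zero_left)
next
  case (Suc k)
  then obtain i j g where "i \<noteq> j" "g \<in> capped_sums k (2 * k)"
    and fg: "\<And>l. f l = g l + (if l \<in> {i, j} then 1 else 0)"
    using capped_sums_remove_edge[OF assms(1)] by blast
  then have "vec_of_nat g \<in> (\<lambda>y. real k *\<^sub>R y) ` edge_polytope complete_graph_edges"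
    and "rho {i, j} \<in> edge_polytope complete_graph_edges"
    using Suc.IH by (auto intro!: rho_in_edge_polytope simp: complete_graph_edges_def)
  moreover have "vec_of_nat f = vec_of_nat g + rho {i, j}"
    by (simp add: vec_eq_iff fg rho_nth)
  ultimately show ?case
    unfolding edge_polytope_def by (metis convex_convex_hull convex_dilation_add)
qed

lemma integer_points_dilated_complete_edge_polytope:
  assumes "CARD('n::finite) \<ge> 2"
  shows "{x \<in> (\<lambda>y. real m *\<^sub>R y) ` edge_polytope (complete_graph_edges :: 'n set set).
            \<forall>i. x $ i \<in> \<int>} = vec_of_nat ` capped_sums m (2 * m)"
proof
  show "vec_of_nat ` capped_sums m (2 * m) \<subseteq>
      {x \<in> (\<lambda>y. real m *\<^sub>R y) ` edge_polytope (complete_graph_edges :: 'n set set). \<forall>i. x $ i \<in> \<int>}"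
    using vec_of_nat_capped_sums_in_dilated_edge_polytope[OF assms] by auto
next
  show "{x \<in> (\<lambda>y. real m *\<^sub>R y) ` edge_polytope (complete_graph_edges :: 'n set set). \<forall>i. x $ i \<in> \<int>}
      \<subseteq> vec_of_nat ` capped_sums m (2 * m)"
  proof safe
    fix y :: "real^'n"
    assume y: "y \<in> edge_polytope complete_graph_edges" and int: "\<forall>i. (real m *\<^sub>R y) $ i \<in> \<int>"
    have y01: "y $ i \<in> {0..1}" and ysum: "(\<Sum>i\<in>UNIV. y $ i) = 2" for i
      using edge_polytope_complete_graph_subset y by blast+
    define f where "f i = nat \<lfloor>real m * y $ i\<rfloor>" for i
    have f: "real (f i) = real m * y $ i" for i
      using int y01[of i] unfolding f_def by (auto elim!: Ints_cases)
    have "f i \<le> m" for i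
      using f[of i] y01[of i] mult_left_le[of "y $ i" "real m"] by (simp flip: of_nat_le_iff)
    moreover have "real (sum f UNIV) = real (2 * m)"
      by (simp add: f ysum flip: sum_distrib_left)
    ultimately have "f \<in> capped_sums m (2 * m)"
      unfolding capped_sums_def by (simp only: of_nat_eq_iff) blast
    moreover have "real m *\<^sub>R y = vec_of_nat f"
      by (simp add: vec_eq_iff f)
    ultimately show "real m *\<^sub>R y \<in> vec_of_nat ` capped_sums m (2 * m)"
      by blast
  qed
qed

lemma lattice_points_count_complete_edge_polytope:
  assumes "CARD('n::finite) \<ge> 2"
  shows "lattice_points_count (edge_polytope (complete_graph_edges :: 'n set set)) m
           = card (capped_sums m (2 * m) :: ('n \<Rightarrow> nat) set)"
  unfolding lattice_points_count_def integer_points_dilated_complete_edge_polytope[OF assms]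
  by (rule card_image) (rule inj_on_subset[OF inj_vec_of_nat subset_UNIV])

section \<open>Counting compositions with bounded parts\<close>

lemma sum_count_UNIV: "sum (count M) UNIV = size (M :: 'a::finite multiset)"
  unfolding size_multiset_overloaded_eq by (rule sum.mono_neutral_right) (auto simp: not_in_iff)

lemma bij_betw_count_multisets_of_size:
  "bij_betw count (multisets_of_size UNIV s) {f :: 'a::finite \<Rightarrow> nat. sum f UNIV = s}"
proof (rule bij_betw_byWitness[where f' = Abs_multiset])
  show "\<forall>M \<in> multisets_of_size (UNIV :: 'a set) s. Abs_multiset (count M) = M"
    by (simp add: count_inverse)
  show "\<forall>f \<in> {f :: 'a \<Rightarrow> nat. sum f UNIV = s}. count (Abs_multiset f) = f"
    by (simp add: count_Abs_multiset)
  then show "Abs_multiset ` {f. sum f UNIV = s} \<subseteq> multisets_of_size (UNIV :: 'a set) s"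
    by (auto simp: multisets_of_size_def simp flip: sum_count_UNIV)
  show "count ` multisets_of_size (UNIV :: 'a set) s \<subseteq> {f. sum f UNIV = s}"
    by (auto simp: multisets_of_size_def sum_count_UNIV)
qed

lemma finite_sum_eq: "finite {f :: 'a::finite \<Rightarrow> nat. sum f UNIV = s}"
  using bij_betw_finite[OF bij_betw_count_multisets_of_size[where 'a = 'a and s = s]]
    finite_multisets_of_size[of "UNIV :: 'a set" s]
  by simp

lemma card_sum_eq: "card {f :: 'a::finite \<Rightarrow> nat. sum f UNIV = s} = (CARD('a) + s - 1) choose s"
  using bij_betw_same_card[OF bij_betw_count_multisets_of_size[where 'a = 'a and s = s]]
    card_multisets_of_size[of "UNIV :: 'a set" s]
  by simp

lemma card_sum_eq_exceeding:
  "card {f :: 'n::finite \<Rightarrow> nat. sum f UNIV = s \<and> m < f i}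
     = card {g :: 'n \<Rightarrow> nat. sum g UNIV + Suc m = s}"
proof -
  define e :: "'n \<Rightarrow> nat" where "e l = (if l = i then Suc m else 0)" for l
  have sum_e: "sum e UNIV = Suc m"
    by (simp add: e_def)
  have sum_plus_e: "(\<Sum>l\<in>UNIV. g l + e l) = sum g UNIV + Suc m" for g
    by (simp add: sum.distrib sum_e)
  have "bij_betw (\<lambda>g l. g l + e l) {g. sum g UNIV + Suc m = s} {f. sum f UNIV = s \<and> m < f i}"
  proof (rule bij_betw_byWitness[where f' = "\<lambda>f l. f l - e l"])
    show "\<forall>f\<in>{f. sum f UNIV = s \<and> m < f i}. (\<lambda>l. f l - e l + e l) = f"
      by (auto simp: fun_eq_iff e_def)
    show "(\<lambda>f l. f l - e l) ` {f. sum f UNIV = s \<and> m < f i} \<subseteq> {g. sum g UNIV + Suc m = s}"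
    proof clarify
      fix f :: "'n \<Rightarrow> nat" assume "m < f i"
      then have "sum f UNIV = (\<Sum>l\<in>UNIV. f l - e l + e l)"
        by (intro sum.cong) (auto simp: e_def)
      then show "(\<Sum>l\<in>UNIV. f l - e l) + Suc m = sum f UNIV"
        using sum_plus_e[of "\<lambda>l. f l - e l"] by simp
    qed
    show "(\<lambda>g l. g l + e l) ` {g. sum g UNIV + Suc m = s} \<subseteq> {f. sum f UNIV = s \<and> m < f i}"
      using sum_plus_e by (auto simp: e_def)
  qed (auto simp: fun_eq_iff)
  then show ?thesis
    by (rule bij_betw_same_card[symmetric])
qed

lemma card_sum_eq_split_capped:
  assumes "s \<le> 2 * m + 1"
  shows "card {f :: 'n::finite \<Rightarrow> nat. sum f UNIV = s}
           = card (capped_sums m s :: ('n \<Rightarrow> nat) set)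
             + CARD('n) * card {g :: 'n \<Rightarrow> nat. sum g UNIV + Suc m = s}"
proof -
  define B where "B i = {f :: 'n \<Rightarrow> nat. sum f UNIV = s \<and> m < f i}" for i
  have fin: "finite (capped_sums m s)" "finite (B i)" for i
    by (rule finite_subset[OF _ finite_sum_eq[of s]], force simp: B_def capped_sums_def)+
  have disj: "capped_sums m s \<inter> (\<Union>i. B i) = {}"
    by (auto simp: B_def capped_sums_def) (meson leD)
  have "B i \<inter> B j = {}" if "i \<noteq> j" for i j
  proof -
    have False if "f \<in> B i" "f \<in> B j" for f
    proof -
      have "f i + f j \<le> sum f UNIV"
        using sum_mono2[of UNIV "{i, j}" f] \<open>i \<noteq> j\<close> by simp
      then show False using that assms by (simp add: B_def)
    qed
    then show ?thesis by blast
  qed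
  then have "card (\<Union>i. B i) = (\<Sum>i\<in>UNIV. card (B i))"
    using fin(2) by (intro card_UN_disjoint) auto
  also have "\<dots> = CARD('n) * card {g :: 'n \<Rightarrow> nat. sum g UNIV + Suc m = s}"
    by (simp add: B_def card_sum_eq_exceeding)
  moreover have "{f. sum f UNIV = s} = capped_sums m s \<union> (\<Union>i. B i)"
    by (auto simp: B_def capped_sums_def not_le)
  ultimately show ?thesis
    using card_Un_disjoint[OF fin(1) _ disj] fin(2) by simp
qed

lemma of_nat_choose_pochhammer:
  "(of_nat ((s + k) choose k) :: 'a::field_char_0) = pochhammer (of_nat s + 1) k / fact k"
  by (simp add: binomial_gbinomial gbinomial_pochhammer')

text \<open>The hypothesis \<open>k \<ge> 1\<close> matters for \<open>m = 0\<close>, where \<open>pochhammer 0 0 = 1\<close>.\<close>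
lemma real_card_capped_sums_double:
  assumes "CARD('n::finite) = Suc k" "k \<ge> 1"
  shows "real (card (capped_sums m (2 * m) :: ('n \<Rightarrow> nat) set))
           = (pochhammer (2 * real m + 1) k - real (Suc k) * pochhammer (real m) k) / fact k"
proof -
  have "card {f :: 'n \<Rightarrow> nat. sum f UNIV = 2 * m} = (2 * m + k) choose k"
    using binomial_symmetric[of "2 * m" "2 * m + k"] by (simp add: card_sum_eq assms(1)) (metis add.commute)
  then have all: "real (card {f :: 'n \<Rightarrow> nat. sum f UNIV = 2 * m}) = pochhammer (2 * real m + 1) k / fact k"
    using of_nat_choose_pochhammer[of "2 * m" k] by simp
  have over: "real (card {g :: 'n \<Rightarrow> nat. sum g UNIV + Suc m = 2 * m}) = pochhammer (real m) k / fact k"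
  proof (cases m)
    case 0
    then show ?thesis using assms(2) by (simp add: pochhammer_0_left)
  next
    case (Suc m')
    then have "{g :: 'n \<Rightarrow> nat. sum g UNIV + Suc m = 2 * m} = {g. sum g UNIV = m'}"
      by auto
    moreover have "card {g :: 'n \<Rightarrow> nat. sum g UNIV = m'} = (m' + k) choose k"
      using binomial_symmetric[of m' "m' + k"] by (simp add: card_sum_eq assms(1)) (metis add.commute)
    ultimately have "real (card {g :: 'n \<Rightarrow> nat. sum g UNIV + Suc m = 2 * m}) = real ((m' + k) choose k)"
      by simp
    also have "\<dots> = pochhammer (real m' + 1) k / fact k"
      by (rule of_nat_choose_pochhammer)
    also have "real m' + 1 = real m"
      using Suc by simp
    finally show ?thesis .
  qed
  have "card {f :: 'n \<Rightarrow> nat. sum f UNIV = 2 * m}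
      = card (capped_sums m (2 * m) :: ('n \<Rightarrow> nat) set)
        + Suc k * card {g :: 'n \<Rightarrow> nat. sum g UNIV + Suc m = 2 * m}"
    using card_sum_eq_split_capped[of "2 * m" m, where 'n = 'n] assms(1) by simp
  then have "real (card {f :: 'n \<Rightarrow> nat. sum f UNIV = 2 * m})
      = real (card (capped_sums m (2 * m) :: ('n \<Rightarrow> nat) set))
        + real (Suc k) * real (card {g :: 'n \<Rightarrow> nat. sum g UNIV + Suc m = 2 * m})"
    by (simp only: of_nat_add[symmetric] of_nat_mult[symmetric] of_nat_eq_iff)
  then show ?thesis
    unfolding all over by (simp add: field_simps)
qed

section \<open>The Ehrhart polynomial of the complete graph\<close>

lemma poly_pochhammer: "poly (pochhammer p k) x = pochhammer (poly p x) k"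
  by (induction k) (simp_all add: pochhammer_Suc)

lemma poly_map_poly_of_real:
  "poly (map_poly of_real p) (of_real x :: 'a::{real_algebra_1, field}) = of_real (poly p x)"
  by (induction p) (auto simp: map_poly_pCons)

lemma poly_eqI_of_nat:
  fixes p q :: "'a::{idom, ring_char_0} poly"
  assumes "\<And>m. poly p (of_nat m) = poly q (of_nat m)"
  shows "p = q"
proof (rule ccontr)
  assume "p \<noteq> q"
  then have "finite {x. poly (p - q) x = 0}"
    by (intro poly_roots_finite) simp
  moreover have "\<nat> \<subseteq> {x. poly (p - q) x = 0}"
    using assms by (auto elim: Nats_cases)
  ultimately show False
    using Nats_infinite finite_subset by blast
qed

lemma pochhammer_eq_if_ehrhart_root:
  fixes p :: "real poly" and \<alpha> :: complex
  assumes "CARD('n::finite) = Suc k" "k \<ge> 1"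
    and "is_ehrhart_poly (edge_polytope (complete_graph_edges :: 'n set set)) p"
    and "poly (map_poly complex_of_real p) \<alpha> = 0"
  shows "pochhammer (2 * \<alpha> + 1) k = of_nat (Suc k) * pochhammer \<alpha> k"
proof -
  define Q :: "complex poly" where
    "Q = smult (1 / fact k) (pochhammer [:1, 2:] k - smult (of_nat (Suc k)) (pochhammer [:0, 1:] k))"
  have poly_Q: "poly Q x = (pochhammer (2 * x + 1) k - of_nat (Suc k) * pochhammer x k) / fact k" for x
    by (simp add: Q_def poly_pochhammer add.commute mult.commute)
  have "map_poly complex_of_real p = Q"
  proof (rule poly_eqI_of_nat)
    fix m
    have "poly p (real m) = (pochhammer (2 * real m + 1) k - real (Suc k) * pochhammer (real m) k) / fact k"
      using assms(3) lattice_points_count_complete_edge_polytope[of m, where 'n = 'n]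
        real_card_capped_sums_double[OF assms(1,2), of m] assms(1,2)
      by (simp add: is_ehrhart_poly_def)
    then show "poly (map_poly complex_of_real p) (of_nat m) = poly Q (of_nat m)"
      using poly_map_poly_of_real[of p "real m", where 'a = complex]
      by (simp add: poly_Q of_real_divide of_real_diff flip: pochhammer_of_real)
  qed
  then show ?thesis
    using assms(4) by (simp add: poly_Q)
qed

section \<open>Location of the roots\<close>

lemma norm_add_real_mono:
  fixes u :: complex and a b :: real
  assumes "Re u \<ge> 0" "\<bar>a\<bar> \<le> b"
  shows "cmod (u + of_real a) \<le> cmod (u + of_real b)"
proof -
  have "\<bar>Re u + a\<bar> \<le> \<bar>Re u + b\<bar>"
    using assms by arith
  then have "(Re u + a)^2 \<le> (Re u + b)^2"
    by (simp only: abs_le_square_iff)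
  then have "cmod (u + of_real a)^2 \<le> cmod (u + of_real b)^2"
    by (simp add: cmod_power2)
  then show ?thesis
    by (rule power2_le_imp_le) simp
qed

lemma norm_add_real_ratio:
  fixes u :: complex and a b :: real
  assumes "Re u \<ge> 0" "0 \<le> b" "b \<le> a"
  shows "b * cmod (u + of_real a) \<le> a * cmod (u + of_real b)"
proof -
  have sq: "(c * cmod (u + of_real d))^2 = c^2 * (Re u + d)^2 + c^2 * (Im u)^2" for c d
    by (simp only: power_mult_distrib cmod_power2 distrib_left plus_complex.sel
        Re_complex_of_real Im_complex_of_real add_0_right)
  have "b * (Re u + a) \<le> a * (Re u + b)"
    using mult_left_mono[OF assms(3) assms(1)] by (simp add: algebra_simps)
  then have "(b * (Re u + a))^2 \<le> (a * (Re u + b))^2"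
    by (rule power_mono) (use assms in simp)
  then have re: "b^2 * (Re u + a)^2 \<le> a^2 * (Re u + b)^2"
    by (simp only: power_mult_distrib)
  have "b^2 \<le> a^2"
    by (rule power_mono) (use assms in simp_all)
  then have im: "b^2 * (Im u)^2 \<le> a^2 * (Im u)^2"
    by (rule mult_right_mono) simp
  have "(b * cmod (u + of_real a))^2 \<le> (a * cmod (u + of_real b))^2"
    unfolding sq using re im by (rule add_mono)
  then show ?thesis
    by (rule power2_le_imp_le) (use assms in simp)
qed

lemma norm_double_add: "cmod (2 * z + c) = 2 * cmod (z + c / 2)"
proof -
  have "cmod (2 * z + c) = cmod (2 * (z + c / 2))"
    by (simp add: algebra_simps)
  also have "\<dots> = 2 * cmod (z + c / 2)"
    by (simp only: norm_mult) simp
  finally show ?thesis .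
qed

lemma norm_add_real_pos:
  fixes u :: complex and a :: real
  assumes "Re u \<ge> 0" "a > 0"
  shows "cmod (u + of_real a) > 0"
  using assms by (auto simp: zero_less_norm_iff dest!: arg_cong[where f = Re])

lemma norm_reflect_double:
  fixes z :: complex and K c :: real
  shows "cmod (2 * z + of_real c) = cmod (- (2 * z + of_real K) + of_real (K - c))"
proof -
  have "- (2 * z + of_real K) + of_real (K - c) = - (2 * z + of_real c)"
    by (simp add: algebra_simps)
  then show ?thesis
    by (simp only: norm_minus_cancel)
qed

text \<open>The bounds below are the comparisons of moduli used for \<open>Re z \<le> -(k + 1) / 2\<close>,
  written in the reflected variable \<open>u = -(2 z + k + 1)\<close>, which has \<open>Re u \<ge> 0\<close>.\<close>
lemma norm_ineq_base3:
  fixes u :: complex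
  assumes "Re u \<ge> 0"
  shows "cmod (u + 4) * cmod u < 2 * cmod (u + 3) * cmod (u + 1)"
proof -
  have "3 * cmod (u + 4) \<le> 4 * cmod (u + 3)"
    using norm_add_real_ratio[OF assms, of 3 4] by simp
  moreover have "cmod u \<le> cmod (u + 1)"
    using norm_add_real_mono[OF assms, of 0 1] by simp
  ultimately have "3 * cmod (u + 4) * cmod u \<le> 4 * cmod (u + 3) * cmod (u + 1)"
    by (rule mult_mono) simp_all
  moreover have "cmod (u + 3) * cmod (u + 1) > 0"
    using norm_add_real_pos[OF assms, of 3] norm_add_real_pos[OF assms, of 1] by simp
  ultimately show ?thesis
    by linarith
qed

lemma norm_ineq_base4:
  fixes u :: complex
  assumes "Re u \<ge> 0"
  shows "5 * cmod (u + 5) * cmod (u - 1) < 16 * cmod (u + 4) * cmod (u + 2)"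
proof -
  have "4 * cmod (u + 5) \<le> 5 * cmod (u + 4)"
    using norm_add_real_ratio[OF assms, of 4 5] by simp
  moreover have "cmod (u - 1) \<le> cmod (u + 2)"
    using norm_add_real_mono[OF assms, of "-1" 2] by simp
  ultimately have "4 * cmod (u + 5) * cmod (u - 1) \<le> 5 * cmod (u + 4) * cmod (u + 2)"
    by (rule mult_mono) simp_all
  moreover have "cmod (u + 4) * cmod (u + 2) > 0"
    using norm_add_real_pos[OF assms, of 4] norm_add_real_pos[OF assms, of 2] by simp
  ultimately show ?thesis
    by linarith
qed

lemma norm_ineq_step:
  fixes u :: complex and k :: real
  assumes "Re u \<ge> 0" "k \<ge> 3"
  shows "(k + 1) * cmod (u + of_real (k + 1)) * cmod (u + of_real (3 - k))
           \<le> 4 * (k - 1) * cmod (u + of_real k) * cmod (u + of_real (k - 1))"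
proof -
  let ?A = "cmod (u + of_real (k + 1))" and ?B = "cmod (u + of_real (3 - k))"
  let ?C = "cmod (u + of_real (k - 1))" and ?D = "cmod (u + of_real k)"
  have "(k - 1) * ?A \<le> (k + 1) * ?C"
    using norm_add_real_ratio[OF assms(1), of "k - 1" "k + 1"] assms(2) by simp
  moreover have "?B \<le> ?D"
    using norm_add_real_mono[OF assms(1), of "3 - k" k] assms(2) by simp
  ultimately have AB: "(k - 1) * ?A * ?B \<le> (k + 1) * ?C * ?D"
    by (rule mult_mono) (use assms(2) in simp_all)
  have "0 \<le> (3 * k - 1) * (k - 3)"
    using assms(2) by simp
  then have sq: "(k + 1) * (k + 1) \<le> 4 * (k - 1) * (k - 1)"
    by (simp add: algebra_simps)
  have "(k - 1) * ((k + 1) * ?A * ?B) = (k + 1) * ((k - 1) * ?A * ?B)"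
    by (simp add: algebra_simps)
  also have "\<dots> \<le> (k + 1) * ((k + 1) * ?C * ?D)"
    using AB assms(2) by (intro mult_left_mono) simp_all
  also have "\<dots> = ((k + 1) * (k + 1)) * (?C * ?D)"
    by (simp add: algebra_simps)
  also have "\<dots> \<le> (4 * (k - 1) * (k - 1)) * (?C * ?D)"
    using sq by (intro mult_right_mono) simp_all
  also have "\<dots> = (k - 1) * (4 * (k - 1) * ?D * ?C)"
    by (simp add: algebra_simps)
  finally show ?thesis
    using assms(2) by (simp add: mult_le_cancel_left_pos)
qed

lemma norm_add_pos_if_Re_neg:
  fixes z :: complex
  assumes "Re z + c < 0"
  shows "cmod (z + of_real c) > 0"
  using assms by (auto simp: zero_less_norm_iff dest!: arg_cong[where f = Re])

lemma pochhammer_double_norm_ge: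
  fixes z :: complex
  assumes "Re z \<ge> 0"
  shows "2 * real k * cmod (pochhammer z k) \<le> cmod (pochhammer (2 * z + 1) k)"
proof (induction k)
  case 0
  then show ?case by simp
next
  case (Suc k)
  show ?case
  proof (cases "k = 0")
    case True
    then show ?thesis
      using norm_add_real_mono[OF assms, of 0 "1 / 2"] norm_double_add[of z 1] by simp
  next
    case False
    have factor: "real (Suc k) * cmod (z + of_nat k) \<le> real k * cmod (2 * z + 1 + of_nat k)"
      using norm_add_real_ratio[OF assms, of "(real k + 1) / 2" "real k"]
        norm_double_add[of z "1 + of_nat k"] False
      by (simp add: add.assoc field_simps)
    have "2 * real (Suc k) * cmod (pochhammer z k) * cmod (z + of_nat k)
        \<le> 2 * real k * cmod (pochhammer z k) * cmod (2 * z + 1 + of_nat k)"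
      using mult_left_mono[OF factor, of "2 * cmod (pochhammer z k)"] by (simp add: algebra_simps)
    also have "\<dots> \<le> cmod (pochhammer (2 * z + 1) k) * cmod (2 * z + 1 + of_nat k)"
      by (intro mult_right_mono Suc.IH) simp
    finally show ?thesis
      by (simp add: pochhammer_Suc norm_mult mult.assoc)
  qed
qed

lemma Re_neg_if_pochhammer_eq:
  fixes z :: complex
  assumes "k \<ge> 2" "pochhammer (2 * z + 1) k = of_nat (Suc k) * pochhammer z k"
  shows "Re z < 0"
proof (rule ccontr)
  assume "\<not> Re z < 0"
  then have z: "Re z \<ge> 0" by simp
  have "pochhammer (2 * z + 1) k \<noteq> 0"
  proof
    assume "pochhammer (2 * z + 1) k = 0"
    then obtain j :: nat where "2 * z + 1 = - of_nat j"
      by (auto simp: pochhammer_eq_0_iff)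
    then have "Re (2 * z + 1) = Re (- of_nat j)"
      by (rule arg_cong)
    then have "2 * Re z + 1 = - real j"
      by simp
    then show False
      using z by simp
  qed
  then have "cmod (pochhammer z k) > 0"
    using assms(2) by auto
  moreover have "2 * real k * cmod (pochhammer z k) \<le> real (Suc k) * cmod (pochhammer z k)"
    using pochhammer_double_norm_ge[OF z, of k] assms(2) by (simp add: norm_mult del: of_nat_Suc)
  ultimately show False
    using assms(1) by simp
qed

lemma pochhammer_norm_gt_3:
  fixes z :: complex
  assumes "Re z \<le> -2"
  shows "4 * cmod (pochhammer z 3) < cmod (pochhammer (2 * z + 1) 3)"
proof -
  define u where "u = - (2 * z + 4)"
  have u: "Re u \<ge> 0"
    using assms by (simp add: u_def)
  have refl: "cmod (u + of_real (4 - c)) = cmod (2 * z + of_real c)" for c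
    using norm_reflect_double[of z c 4] by (simp add: u_def)
  have "cmod (2 * z) * cmod (2 * z + 4) < 2 * cmod (2 * z + 1) * cmod (2 * z + 3)"
    using norm_ineq_base3[OF u] refl[of 0] refl[of 4] refl[of 1] refl[of 3] by simp
  then have "4 * (cmod z * cmod (z + 2)) < 2 * (cmod (2 * z + 1) * cmod (2 * z + 3))"
    using norm_double_add[of z 4] by (simp add: norm_mult)
  moreover have "cmod (z + 1) > 0"
    using norm_add_pos_if_Re_neg[of z 1] assms by simp
  ultimately have "4 * (cmod z * cmod (z + 2)) * cmod (z + 1)
      < 2 * (cmod (2 * z + 1) * cmod (2 * z + 3)) * cmod (z + 1)"
    by (rule mult_strict_right_mono)
  moreover have "cmod (pochhammer z 3) = cmod z * cmod (z + 1) * cmod (z + 2)"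
    by (simp add: eval_nat_numeral pochhammer_Suc norm_mult)
  moreover have "cmod (pochhammer (2 * z + 1) 3) = cmod (2 * z + 1) * cmod (2 * z + 2) * cmod (2 * z + 3)"
    by (simp add: eval_nat_numeral pochhammer_Suc norm_mult add.assoc)
  moreover have "cmod (2 * z + 2) = 2 * cmod (z + 1)"
    using norm_double_add[of z 2] by simp
  ultimately show ?thesis
    by (simp add: mult_ac)
qed

lemma pochhammer_norm_gt_4:
  fixes z :: complex
  assumes "Re z \<le> -5 / 2"
  shows "5 * cmod (pochhammer z 4) < cmod (pochhammer (2 * z + 1) 4)"
proof -
  define u where "u = - (2 * z + 5)"
  have u: "Re u \<ge> 0"
    using assms by (simp add: u_def)
  have refl: "cmod (u + of_real (5 - c)) = cmod (2 * z + of_real c)" for c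
    using norm_reflect_double[of z c 5] by (simp add: u_def)
  have "5 * cmod (2 * z) * cmod (2 * z + 6) < 16 * cmod (2 * z + 1) * cmod (2 * z + 3)"
    using norm_ineq_base4[OF u] refl[of 0] refl[of 6] refl[of 1] refl[of 3] by simp
  then have "5 * (cmod z * cmod (z + 3)) < 4 * (cmod (2 * z + 1) * cmod (2 * z + 3))"
    using norm_double_add[of z 6] by (simp add: norm_mult)
  moreover have "cmod (z + 1) * cmod (z + 2) > 0"
    using norm_add_pos_if_Re_neg[of z 1] norm_add_pos_if_Re_neg[of z 2] assms by simp
  ultimately have "5 * (cmod z * cmod (z + 3)) * (cmod (z + 1) * cmod (z + 2))
      < 4 * (cmod (2 * z + 1) * cmod (2 * z + 3)) * (cmod (z + 1) * cmod (z + 2))"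
    by (rule mult_strict_right_mono)
  moreover have "cmod (pochhammer z 4) = cmod z * cmod (z + 1) * cmod (z + 2) * cmod (z + 3)"
    by (simp add: eval_nat_numeral pochhammer_Suc norm_mult)
  moreover have "cmod (pochhammer (2 * z + 1) 4)
      = cmod (2 * z + 1) * cmod (2 * z + 2) * cmod (2 * z + 3) * cmod (2 * z + 4)"
    by (simp add: eval_nat_numeral pochhammer_Suc norm_mult add.assoc)
  moreover have "cmod (2 * z + 2) = 2 * cmod (z + 1)" "cmod (2 * z + 4) = 2 * cmod (z + 2)"
    using norm_double_add[of z 2] norm_double_add[of z 4] by simp_all
  ultimately show ?thesis
    by (simp add: mult_ac)
qed

lemma pochhammer_norm_gt_step:
  fixes z :: complex and k :: nat
  assumes "k \<ge> 3" "Re z \<le> - (real k + 1) / 2"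
  shows "real (Suc k) * (cmod z * cmod (z + of_nat (k - 1)))
           \<le> real (k - 1) * (cmod (2 * z + 1) * cmod (2 * z + 2))"
proof -
  define u where "u = - (2 * z + of_real (real k + 1))"
  have u: "Re u \<ge> 0"
    using assms by (simp add: u_def)
  have refl: "cmod (u + of_real (real k + 1 - c)) = cmod (2 * z + of_real c)" for c
    using norm_reflect_double[of z c "real k + 1"] by (simp add: u_def)
  have "(real k + 1) * cmod (2 * z) * cmod (2 * z + of_real (2 * real k - 2))
      \<le> 4 * (real k - 1) * cmod (2 * z + 1) * cmod (2 * z + 2)"
    using norm_ineq_step[OF u, of "real k"] assms(1) refl[of 0] refl[of "2 * real k - 2"]
      refl[of 1] refl[of 2]
    by (simp add: algebra_simps)
  moreover have "2 * z + of_real (2 * real k - 2) = 2 * (z + of_nat (k - 1))"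
    using assms(1) by (simp add: of_nat_diff algebra_simps)
  then have "cmod (2 * z + of_real (2 * real k - 2)) = 2 * cmod (z + of_nat (k - 1))"
    by (simp only: norm_mult) simp
  ultimately show ?thesis
    using assms(1) by (simp add: norm_mult of_nat_diff algebra_simps)
qed

lemma pochhammer_norm_gt:
  fixes z :: complex
  assumes "k \<ge> 3" "Re z \<le> - (real k + 1) / 2"
  shows "real (Suc k) * cmod (pochhammer z k) < cmod (pochhammer (2 * z + 1) k)"
  using assms
proof (induction k arbitrary: z rule: less_induct)
  case (less k)
  consider "k = 3" | "k = 4" | "k \<ge> 5"
    using less.prems(1) by linarith
  then show ?case
  proof cases
    case 1
    then show ?thesis
      using pochhammer_norm_gt_3[of z] less.prems(2) by simp
  next
    case 2
    then show ?thesis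
      using pochhammer_norm_gt_4[of z] less.prems(2) by simp
  next
    case 3
    define j where "j = k - 2"
    have k: "k = Suc (Suc j)" "j \<ge> 3"
      using 3 by (simp_all add: j_def)
    have IH: "real (Suc j) * cmod (pochhammer (z + 1) j) < cmod (pochhammer (2 * z + 3) j)"
      using less.IH[of j "z + 1"] less.prems(2) k by (simp add: algebra_simps)
    let ?P = "cmod (pochhammer (z + 1) j)" and ?Q = "cmod (2 * z + 1) * cmod (2 * z + 2)"
    have "pochhammer z k = z * (pochhammer (z + 1) j * (z + 1 + of_nat j))"
      unfolding k pochhammer_rec[of z "Suc j"] pochhammer_Suc[of "z + 1" j] ..
    then have "real (Suc k) * cmod (pochhammer z k) = real (Suc k) * (cmod z * cmod (z + of_nat (k - 1))) * ?P"
      by (simp add: k norm_mult add.assoc mult_ac)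
    also have "\<dots> \<le> real (Suc j) * ?Q * ?P"
      using pochhammer_norm_gt_step[OF less.prems] k by (intro mult_right_mono) simp_all
    also have "\<dots> = ?Q * (real (Suc j) * ?P)"
      by (simp add: mult_ac)
    also have "\<dots> < ?Q * cmod (pochhammer (2 * z + 3) j)"
      using IH norm_add_pos_if_Re_neg[of "2 * z" 1] norm_add_pos_if_Re_neg[of "2 * z" 2]
        less.prems(2) k by (intro mult_strict_left_mono) simp_all
    also have "\<dots> = cmod (pochhammer (2 * z + 1) k)"
    proof -
      have "pochhammer (2 * z + 1) k = (2 * z + 1) * ((2 * z + 2) * pochhammer (2 * z + 3) j)"
        unfolding k pochhammer_rec by (simp add: add.assoc)
      then show ?thesis
        by (simp only: norm_mult mult.assoc)
    qed
    finally show ?thesis .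
  qed
qed

lemma Re_gt_if_pochhammer_eq:
  fixes z :: complex
  assumes "k \<ge> 3" "pochhammer (2 * z + 1) k = of_nat (Suc k) * pochhammer z k"
  shows "- (real k + 1) / 2 < Re z"
proof (rule ccontr)
  assume "\<not> - (real k + 1) / 2 < Re z"
  then have "real (Suc k) * cmod (pochhammer z k) < cmod (pochhammer (2 * z + 1) k)"
    using pochhammer_norm_gt[OF assms(1)] by simp
  then show False
    using assms(2) by (simp add: norm_mult del: of_nat_Suc)
qed

lemma pochhammer_eq_2_roots:
  fixes z :: complex
  assumes "pochhammer (2 * z + 1) 2 = of_nat 3 * pochhammer z 2"
  shows "z = -1 \<or> z = -2"
proof -
  have "(z + 1) * (z + 2) = 0"
    using assms by (simp add: eval_nat_numeral pochhammer_Suc algebra_simps)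
  then show ?thesis
    by (simp add: add_eq_0_iff2)
qed

theorem proposition1p2:
  fixes p :: "real poly" and \<alpha> :: complex
  assumes "CARD('n::finite) \<ge> 3"
    and "is_ehrhart_poly (edge_polytope (complete_graph_edges :: 'n set set)) p"
    and "poly (map_poly complex_of_real p) \<alpha> = 0"
  shows "(CARD('n) = 3 \<longrightarrow> \<alpha> \<in> {-1, -2})
       \<and> (CARD('n) \<ge> 4 \<longrightarrow> - real CARD('n) / 2 < Re \<alpha> \<and> Re \<alpha> < 0)"
proof -
  define k where "k = CARD('n) - 1"
  have card: "CARD('n) = Suc k"
    using assms(1) by (simp add: k_def)
  have root: "pochhammer (2 * \<alpha> + 1) k = of_nat (Suc k) * pochhammer \<alpha> k"
    using pochhammer_eq_if_ehrhart_root[OF card _ assms(2,3)] assms(1) card by simp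
  show ?thesis
  proof (intro conjI impI)
    assume "CARD('n) = 3"
    then have "k = 2"
      using card by simp
    then show "\<alpha> \<in> {-1, -2}"
      using pochhammer_eq_2_roots[of \<alpha>] root by simp
  next
    assume "CARD('n) \<ge> 4"
    then show "- real CARD('n) / 2 < Re \<alpha>"
      using Re_gt_if_pochhammer_eq[OF _ root] card by simp
  next
    assume "CARD('n) \<ge> 4"
    then show "Re \<alpha> < 0"
      using Re_neg_if_pochhammer_eq[OF _ root] card by simp
  qed
qed

end
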